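(* Let $X$ be a standard Gaussian random vector in $\mathbb{R}^n$ and, for $p\ge1$, $\|x\|_p=(\sum_{i=1}^n|x_i|^p)^{1/p}$. There exist numerical constants $C,c>0$ and $N_0$, independent of $p$ and $n$, such that for all $n\ge N_0$ and all $p>c\log n$, $$ {\rm Var}(\|X\|_p)\le\frac{C}{\log n}. $$ *)

theory Defs
  imports "HOL-Probability.Probability"
begin

definition std_gaussian :: "nat \<Rightarrow> (nat \<Rightarrow> real) measure" where
  "std_gaussian n = PiM {..<n} (\<lambda>_. density lborel std_normal_density)"

definition lp_norm :: "nat \<Rightarrow> real \<Rightarrow> (nat \<Rightarrow> real) \<Rightarrow> real" where
  "lp_norm n p x = (\<Sum>i<n. \<bar>x i\<bar> powr p) powr (1 / p)"

definition var :: "'a measure \<Rightarrow> ('a \<Rightarrow> real) \<Rightarrow> real" where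
  "var M f = (\<integral>x. (f x - (\<integral>y. f y \<partial>M))\<^sup>2 \<partial>M)"

end

theory Submission
  imports Defs "HOL-Real_Asymp.Real_Asymp"
begin

text \<open>Let \<open>a \<ge> 1\<close> solve \<open>n \<phi>(a) = a\<close>, so that \<open>ln n \<le> a\<^sup>2 \<le> 2 ln n\<close> for large \<open>n\<close>.
  For \<open>b \<ge> a\<close> the event \<open>\<parallel>X\<parallel>\<^sub>p > b\<close> has probability at most \<open>4 exp (- a (b - a))\<close>:
  if \<open>p \<ge> 2 b\<^sup>2\<close>, then \<open>(\<bar>y\<bar> / b)\<^sup>p \<le> exp (2 b (\<bar>y\<bar> - b))\<close> on \<open>[-b, b]\<close> and a first-moment
  bound over the coordinates applies; otherwise \<open>p > 400 ln n\<close> makes \<open>b\<close> so large that some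
  coordinate must exceed \<open>b / 2\<close>, which is even less likely. The event \<open>\<parallel>X\<parallel>\<^sub>p < a - s\<close>
  forces all coordinates below \<open>max 1 (a - s)\<close>, which has probability \<open>O (exp (- a s / 2))\<close>.
  So \<open>\<parallel>X\<parallel>\<^sub>p - a\<close> has exponential tails at scale \<open>1 / a\<close>, and
  \<open>Var \<parallel>X\<parallel>\<^sub>p \<le> E (\<parallel>X\<parallel>\<^sub>p - a)\<^sup>2 = O (1 / a\<^sup>2) = O (1 / ln n)\<close>.\<close>

section \<open>Tail bounds for the standard normal distribution\<close>

abbreviation std_normal :: "real measure" where
  "std_normal \<equiv> density lborel std_normal_density"

interpretation std_normal: prob_space std_normal
  by (rule prob_space_normal_density) simp

lemma nn_integral_exp_decay_atLeast:
  fixes l u :: real assumes l: "0 < l"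
  shows "(\<integral>\<^sup>+y. ennreal (exp (- l * (y - u))) * indicator {u..} y \<partial>lborel) = ennreal (1 / l)"
proof -
  have "(\<integral>\<^sup>+y. ennreal (exp (- l * (y - u))) * indicator {u..} y \<partial>lborel)
     = ennreal (0 - (- exp (- l * (u - u)) / l))"
  proof (rule nn_integral_FTC_atLeast[where F="\<lambda>y. - exp (- l * (y - u)) / l" and T=0])
    show "((\<lambda>y. - exp (- l * (y - u)) / l) \<longlongrightarrow> 0) at_top"
      using l by real_asymp
  qed (use l in \<open>auto intro!: derivative_eq_intros\<close>)
  then show ?thesis by simp
qed

lemma nn_integral_exp_growth_atMost:
  fixes l u :: real assumes l: "0 < l"
  shows "(\<integral>\<^sup>+y. ennreal (exp (l * (y - u))) * indicator {..u} y \<partial>lborel) = ennreal (1 / l)"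
proof -
  have "(\<integral>\<^sup>+y. ennreal (exp (l * (y - u))) * indicator {..u} y \<partial>lborel)
     = ennreal \<bar>-1\<bar> * (\<integral>\<^sup>+y. ennreal (exp (l * ((0 + -1 * y) - u))) * indicator {..u} (0 + -1 * y) \<partial>lborel)"
    by (rule nn_integral_real_affine) auto
  also have "\<dots> = (\<integral>\<^sup>+y. ennreal (exp (- l * (y - (-u)))) * indicator {-u..} y \<partial>lborel)"
    by (auto intro!: nn_integral_cong split: split_indicator simp: algebra_simps)
  also have "\<dots> = ennreal (1 / l)" using nn_integral_exp_decay_atLeast[OF l] .
  finally show ?thesis .
qed

text \<open>The exponent \<open>- y\<^sup>2 / 2\<close> is concave in \<open>\<bar>y\<bar>\<close>, so it lies below its tangent at \<open>t\<close>.\<close>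
lemma std_normal_density_le_tangent:
  "std_normal_density y \<le> std_normal_density t * exp (t * (t - \<bar>y\<bar>))"
proof -
  have "- y\<^sup>2 / 2 \<le> - t\<^sup>2 / 2 + t * (t - \<bar>y\<bar>)"
  proof -
    have "0 \<le> (\<bar>y\<bar> - t)\<^sup>2" by simp
    then show ?thesis by (simp add: power2_eq_square algebra_simps abs_mult_self_eq)
  qed
  then have "exp (- y\<^sup>2 / 2) \<le> exp (- t\<^sup>2 / 2) * exp (t * (t - \<bar>y\<bar>))"
    by (simp add: exp_add[symmetric])
  then show ?thesis unfolding std_normal_density_def
    by (simp add: divide_right_mono mult.commute mult.left_commute)
qed

lemma std_normal_density_shift:
  "std_normal_density b = std_normal_density a * exp (- (b\<^sup>2 - a\<^sup>2) / 2)"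
  unfolding std_normal_density_def by (simp add: mult.assoc exp_add[symmetric] field_simps)

lemma std_normal_density_le_exp: "std_normal_density y \<le> exp (- y\<^sup>2 / 2)"
proof -
  have "1 \<le> sqrt (2 * pi)" using pi_gt3 by (simp add: real_le_rsqrt)
  then show ?thesis unfolding std_normal_density_def by (simp add: divide_le_eq)
qed

lemma std_normal_density_1_bounds: "1 / 6 \<le> std_normal_density 1" "std_normal_density 1 \<le> 1"
proof -
  have "1/2 \<le> exp (- 1 / 2 :: real)" using exp_ge_add_one_self[of "- 1 / 2 :: real"] by simp
  moreover have "sqrt (2 * pi) \<le> 3"
    by (rule real_sqrt_le_iff[THEN iffD2, of _ 9, simplified]) (use pi_less_4 in simp)
  ultimately have "1/2 / 3 \<le> exp (- 1 / 2 :: real) / sqrt (2 * pi)"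
    by (intro frac_le) auto
  then show "1 / 6 \<le> std_normal_density 1" unfolding std_normal_density_def by simp
  have "exp (- 1\<^sup>2 / 2) \<le> (1::real)" by simp
  then show "std_normal_density 1 \<le> 1"
    using std_normal_density_le_exp[of 1] by linarith
qed

lemma nn_integral_exp_abs_outside_le:
  fixes l u :: real assumes l: "0 < l"
  shows "(\<integral>\<^sup>+y. ennreal (exp (- l * (\<bar>y\<bar> - u))) * indicator {y. u \<le> \<bar>y\<bar>} y \<partial>lborel)
           \<le> ennreal (2 / l)"
proof -
  have "(\<integral>\<^sup>+y. ennreal (exp (- l * (\<bar>y\<bar> - u))) * indicator {y. u \<le> \<bar>y\<bar>} y \<partial>lborel)
      \<le> (\<integral>\<^sup>+y. ennreal (exp (- l * (y - u))) * indicator {u..} y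
          + ennreal (exp (l * (y - (-u)))) * indicator {..-u} y \<partial>lborel)"
    by (intro nn_integral_mono) (auto split: split_indicator abs_split simp: algebra_simps)
  also have "\<dots> = (\<integral>\<^sup>+y. ennreal (exp (- l * (y - u))) * indicator {u..} y \<partial>lborel)
      + (\<integral>\<^sup>+y. ennreal (exp (l * (y - (-u)))) * indicator {..-u} y \<partial>lborel)"
    by (rule nn_integral_add) measurable
  also have "\<dots> = ennreal (1 / l) + ennreal (1 / l)"
    by (simp only: nn_integral_exp_decay_atLeast[OF l] nn_integral_exp_growth_atMost[OF l])
  also have "\<dots> = ennreal (2 / l)"
    using l by (simp add: ennreal_plus[symmetric] del: ennreal_plus)
  finally show ?thesis .
qed

lemma nn_integral_exp_abs_inside_le:
  fixes l u :: real assumes l: "0 < l"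
  shows "(\<integral>\<^sup>+y. ennreal (exp (l * (\<bar>y\<bar> - u))) * indicator {y. \<bar>y\<bar> \<le> u} y \<partial>lborel)
           \<le> ennreal (2 / l)"
proof -
  have "(\<integral>\<^sup>+y. ennreal (exp (l * (\<bar>y\<bar> - u))) * indicator {y. \<bar>y\<bar> \<le> u} y \<partial>lborel)
      \<le> (\<integral>\<^sup>+y. ennreal (exp (l * (y - u))) * indicator {..u} y
          + ennreal (exp (- l * (y - (-u)))) * indicator {-u..} y \<partial>lborel)"
    by (intro nn_integral_mono) (auto split: split_indicator abs_split simp: algebra_simps)
  also have "\<dots> = (\<integral>\<^sup>+y. ennreal (exp (l * (y - u))) * indicator {..u} y \<partial>lborel)
      + (\<integral>\<^sup>+y. ennreal (exp (- l * (y - (-u)))) * indicator {-u..} y \<partial>lborel)"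
    by (rule nn_integral_add) measurable
  also have "\<dots> = ennreal (1 / l) + ennreal (1 / l)"
    by (simp only: nn_integral_exp_decay_atLeast[OF l] nn_integral_exp_growth_atMost[OF l])
  also have "\<dots> = ennreal (2 / l)"
    using l by (simp add: ennreal_plus[symmetric] del: ennreal_plus)
  finally show ?thesis .
qed

lemma std_normal_tail_le:
  fixes t :: real assumes t: "0 < t"
  shows "emeasure std_normal {y. t < \<bar>y\<bar>} \<le> ennreal (2 * std_normal_density t / t)"
proof -
  let ?c = "std_normal_density t"
  have "emeasure std_normal {y. t < \<bar>y\<bar>}
      = (\<integral>\<^sup>+y. ennreal (std_normal_density y) * indicator {y. t < \<bar>y\<bar>} y \<partial>lborel)"
    by (subst emeasure_density) auto
  also have "\<dots> \<le> (\<integral>\<^sup>+y. ennreal ?c * (ennreal (exp (- t * (\<bar>y\<bar> - t))) * indicator {y. t \<le> \<bar>y\<bar>} y) \<partial>lborel)"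
  proof (rule nn_integral_mono)
    fix y :: real
    have "std_normal_density y \<le> ?c * exp (- t * (\<bar>y\<bar> - t))"
      using std_normal_density_le_tangent[of y t] by (simp add: algebra_simps)
    then show "ennreal (std_normal_density y) * indicator {y. t < \<bar>y\<bar>} y
        \<le> ennreal ?c * (ennreal (exp (- t * (\<bar>y\<bar> - t))) * indicator {y. t \<le> \<bar>y\<bar>} y)"
      by (auto split: split_indicator simp: ennreal_mult[symmetric] ennreal_leI)
  qed
  also have "\<dots> = ennreal ?c * (\<integral>\<^sup>+y. ennreal (exp (- t * (\<bar>y\<bar> - t))) * indicator {y. t \<le> \<bar>y\<bar>} y \<partial>lborel)"
    by (rule nn_integral_cmult) measurable
  also have "\<dots> \<le> ennreal ?c * ennreal (2 / t)"
    by (rule mult_left_mono[OF nn_integral_exp_abs_outside_le[OF t]]) simp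
  also have "\<dots> = ennreal (2 * ?c / t)"
    using t by (simp add: ennreal_mult[symmetric])
  finally show ?thesis .
qed

lemma nn_integral_std_normal_exp_tilt_le:
  fixes b :: real assumes b: "0 < b"
  shows "(\<integral>\<^sup>+y. ennreal (exp (2 * b * (\<bar>y\<bar> - b))) * indicator {y. \<bar>y\<bar> \<le> b} y \<partial>std_normal)
     \<le> ennreal (2 * std_normal_density b / b)"
proof -
  let ?c = "std_normal_density b"
  have "(\<integral>\<^sup>+y. ennreal (exp (2 * b * (\<bar>y\<bar> - b))) * indicator {y. \<bar>y\<bar> \<le> b} y \<partial>std_normal)
     = (\<integral>\<^sup>+y. ennreal (std_normal_density y)
          * (ennreal (exp (2 * b * (\<bar>y\<bar> - b))) * indicator {y. \<bar>y\<bar> \<le> b} y) \<partial>lborel)"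
    by (subst nn_integral_density) auto
  also have "\<dots> \<le> (\<integral>\<^sup>+y. ennreal ?c * (ennreal (exp (b * (\<bar>y\<bar> - b))) * indicator {y. \<bar>y\<bar> \<le> b} y) \<partial>lborel)"
  proof (rule nn_integral_mono)
    fix y :: real
    have "std_normal_density y * exp (2 * b * (\<bar>y\<bar> - b))
        \<le> ?c * exp (b * (b - \<bar>y\<bar>)) * exp (2 * b * (\<bar>y\<bar> - b))"
      by (rule mult_right_mono[OF std_normal_density_le_tangent]) simp
    also have "\<dots> = ?c * exp (b * (\<bar>y\<bar> - b))"
      by (simp add: mult.assoc exp_add[symmetric] algebra_simps)
    finally show "ennreal (std_normal_density y)
          * (ennreal (exp (2 * b * (\<bar>y\<bar> - b))) * indicator {y. \<bar>y\<bar> \<le> b} y)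
        \<le> ennreal ?c * (ennreal (exp (b * (\<bar>y\<bar> - b))) * indicator {y. \<bar>y\<bar> \<le> b} y)"
      by (auto split: split_indicator simp: ennreal_mult[symmetric] ennreal_leI)
  qed
  also have "\<dots> = ennreal ?c * (\<integral>\<^sup>+y. ennreal (exp (b * (\<bar>y\<bar> - b))) * indicator {y. \<bar>y\<bar> \<le> b} y \<partial>lborel)"
    by (rule nn_integral_cmult) measurable
  also have "\<dots> \<le> ennreal ?c * ennreal (2 / b)"
    by (rule mult_left_mono[OF nn_integral_exp_abs_inside_le[OF b]]) simp
  also have "\<dots> = ennreal (2 * ?c / b)"
    using b by (simp add: ennreal_mult[symmetric])
  finally show ?thesis .
qed

lemma std_normal_tail_ge:
  fixes t :: real assumes t: "1 \<le> t"
  shows "exp (-2) * std_normal_density t / t \<le> measure std_normal {y. t < \<bar>y\<bar>}"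
proof -
  let ?c = "exp (-2) * std_normal_density t"
  have "ennreal (?c / t) = ennreal ?c * emeasure lborel {t<..t + 1/t}"
    using t by (simp add: ennreal_mult[symmetric])
  also have "\<dots> = (\<integral>\<^sup>+y. ennreal ?c * indicator {t<..t + 1/t} y \<partial>lborel)"
    by (simp add: nn_integral_cmult_indicator)
  also have "\<dots> \<le> (\<integral>\<^sup>+y. ennreal (std_normal_density y) * indicator {y. t < \<bar>y\<bar>} y \<partial>lborel)"
  proof (intro nn_integral_mono)
    fix y :: real
    show "ennreal ?c * indicator {t<..t + 1/t} y \<le> ennreal (std_normal_density y) * indicator {y. t < \<bar>y\<bar>} y"
    proof (cases "y \<in> {t<..t + 1/t}")
      case True
      then have y: "t < y" "y \<le> t + 1/t" by auto
      have "y * y \<le> (t + 1/t) * (t + 1/t)" using y t by (intro mult_mono) auto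
      also have "\<dots> = t*t + 2 + (1/t)*(1/t)" using t by (simp add: field_simps)
      also have "\<dots> \<le> t*t + 4"
      proof -
        have "(1/t)*(1/t) \<le> 1" using t by (intro mult_le_one) auto
        then show ?thesis by linarith
      qed
      finally have "-2 - t\<^sup>2/2 \<le> - y\<^sup>2/2" by (simp add: power2_eq_square)
      then have "exp (-2) * exp (- t\<^sup>2/2) \<le> exp (- y\<^sup>2/2)" by (simp add: exp_add[symmetric])
      then have "?c \<le> std_normal_density y" unfolding std_normal_density_def
        by (simp add: divide_right_mono mult.commute mult.left_commute)
      then show ?thesis using True y by simp
    qed simp
  qed
  also have "\<dots> = emeasure std_normal {y. t < \<bar>y\<bar>}"
    by (subst emeasure_density) auto
  finally show ?thesis
    using t by (simp add: std_normal.emeasure_eq_measure)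
qed

interpretation std_gaussian: prob_space "std_gaussian n" for n
  unfolding std_gaussian_def by (rule prob_space_PiM) (rule std_normal.prob_space_axioms)

lemma nn_integral_std_gaussian_coordinate_sum:
  fixes h :: "real \<Rightarrow> ennreal" assumes h[measurable]: "h \<in> borel_measurable borel"
  shows "(\<integral>\<^sup>+x. (\<Sum>i<n. h (x i)) \<partial>std_gaussian n) = of_nat n * (\<integral>\<^sup>+y. h y \<partial>std_normal)"
proof -
  interpret product_prob_space "\<lambda>_. std_normal" "{..<n}"
    by (intro product_prob_spaceI) (rule std_normal.prob_space_axioms)
  have "(\<integral>\<^sup>+x. (\<Sum>i<n. h (x i)) \<partial>std_gaussian n) = (\<Sum>i<n. \<integral>\<^sup>+x. h (x i) \<partial>std_gaussian n)"
    unfolding std_gaussian_def by (rule nn_integral_sum) auto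
  also have "\<dots> = (\<Sum>i<n. \<integral>\<^sup>+y. h y \<partial>std_normal)"
  proof (rule sum.cong[OF refl])
    fix i assume i: "i \<in> {..<n}"
    have "(\<integral>\<^sup>+y. h y \<partial>std_normal)
        = (\<integral>\<^sup>+y. h y \<partial>distr (PiM {..<n} (\<lambda>_. std_normal)) std_normal (\<lambda>\<omega>. \<omega> i))"
      using PiM_component[OF i] by simp
    also have "\<dots> = (\<integral>\<^sup>+x. h (x i) \<partial>PiM {..<n} (\<lambda>_. std_normal))"
      using i by (subst nn_integral_distr) auto
    finally show "(\<integral>\<^sup>+x. h (x i) \<partial>std_gaussian n) = (\<integral>\<^sup>+y. h y \<partial>std_normal)"
      unfolding std_gaussian_def by simp
  qed
  finally show ?thesis by simp
qed

lemma
  fixes A :: "real set" assumes A: "A \<in> sets borel"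
  shows sets_std_gaussian_all_coordinates:
      "{x\<in>space (std_gaussian n). \<forall>i<n. x i \<in> A} \<in> sets (std_gaussian n)"
    and emeasure_std_gaussian_all_coordinates:
      "emeasure (std_gaussian n) {x\<in>space (std_gaussian n). \<forall>i<n. x i \<in> A} = emeasure std_normal A ^ n"
proof -
  interpret product_prob_space "\<lambda>_. std_normal" "{..<n}"
    by (intro product_prob_spaceI) (rule std_normal.prob_space_axioms)
  have eq: "{x\<in>space (std_gaussian n). \<forall>i<n. x i \<in> A}
      = {x\<in>space (PiM {..<n} (\<lambda>_. std_normal)). \<forall>i\<in>{..<n}. x i \<in> A}"
    unfolding std_gaussian_def by auto
  show "{x\<in>space (std_gaussian n). \<forall>i<n. x i \<in> A} \<in> sets (std_gaussian n)"
    unfolding eq unfolding std_gaussian_def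
  proof (rule sets.sets_Collect_finite_All)
    fix i assume i: "i \<in> {..<n}"
    have "{y\<in>space std_normal. y \<in> A} \<in> sets std_normal" using A by simp
    then show "{x\<in>space (PiM {..<n} (\<lambda>_. std_normal)). x i \<in> A} \<in> sets (PiM {..<n} (\<lambda>_. std_normal))"
      by (rule sets_Collect_single'[OF i])
  qed simp
  show "emeasure (std_gaussian n) {x\<in>space (std_gaussian n). \<forall>i<n. x i \<in> A} = emeasure std_normal A ^ n"
    unfolding eq using A by (subst std_gaussian_def, subst emeasure_PiM_Collect) auto
qed

lemma emeasure_std_gaussian_le_coordinate_sum:
  fixes g :: "real \<Rightarrow> real"
  assumes g[measurable]: "g \<in> borel_measurable borel" and g_nonneg: "\<And>y. 0 \<le> g y"
    and S[measurable]: "S \<in> sets (std_gaussian n)"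
    and sum_ge: "\<And>x. x \<in> S \<Longrightarrow> 1 \<le> (\<Sum>i<n. g (x i))"
  shows "emeasure (std_gaussian n) S \<le> ennreal (real n) * (\<integral>\<^sup>+y. ennreal (g y) \<partial>std_normal)"
proof -
  have "emeasure (std_gaussian n) S = (\<integral>\<^sup>+x. indicator S x \<partial>std_gaussian n)" using S by simp
  also have "\<dots> \<le> (\<integral>\<^sup>+x. (\<Sum>i<n. ennreal (g (x i))) \<partial>std_gaussian n)"
  proof (rule nn_integral_mono)
    fix x
    show "indicator S x \<le> (\<Sum>i<n. ennreal (g (x i)))"
    proof (cases "x \<in> S")
      case True
      have "ennreal 1 \<le> ennreal (\<Sum>i<n. g (x i))" using sum_ge[OF True] by (rule ennreal_leI)
      then show ?thesis using True g_nonneg by (simp add: sum_ennreal)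
    qed simp
  qed
  also have "\<dots> = of_nat n * (\<integral>\<^sup>+y. ennreal (g y) \<partial>std_normal)"
    by (rule nn_integral_std_gaussian_coordinate_sum) simp
  finally show ?thesis by (simp add: ennreal_of_nat_eq_real_of_nat)
qed

lemma lp_norm_measurable[measurable]: "lp_norm n p \<in> borel_measurable (std_gaussian n)"
  unfolding lp_norm_def[abs_def] std_gaussian_def by measurable

lemma lp_norm_nonneg: "0 \<le> lp_norm n p x"
  unfolding lp_norm_def by simp

lemma abs_coordinate_le_lp_norm:
  assumes p: "0 < p" and i: "i < n"
  shows "\<bar>x i\<bar> \<le> lp_norm n p x"
proof -
  have "\<bar>x i\<bar> powr p \<le> (\<Sum>j<n. \<bar>x j\<bar> powr p)"
    using i by (intro member_le_sum) auto
  then have "(\<bar>x i\<bar> powr p) powr (1/p) \<le> (\<Sum>j<n. \<bar>x j\<bar> powr p) powr (1/p)"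
    using p by (intro powr_mono2) auto
  then show ?thesis using p unfolding lp_norm_def by (simp add: powr_powr)
qed

lemma powr_le_exp_tilt:
  fixes y b p :: real
  assumes y: "0 \<le> y" "y \<le> b" and b: "0 < b" and p: "2 * b * b \<le> p"
  shows "y powr p \<le> b powr p * exp (2 * b * (y - b))"
proof (cases "y = 0")
  case True then show ?thesis using b by simp
next
  case False
  then have y_pos: "0 < y" using y by simp
  have p_pos: "0 < p" using p b by (smt (verit) mult_pos_pos)
  have "ln y - ln b = ln (y / b)" using y_pos b by (simp add: ln_div)
  also have "\<dots> \<le> y / b - 1" using y_pos b by (intro ln_le_minus_one) simp
  also have "\<dots> = (y - b) / b" using b by (simp add: field_simps)
  finally have "p * (ln y - ln b) \<le> p * ((y - b) / b)"
    by (rule mult_left_mono) (use p_pos in simp)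
  also have "\<dots> \<le> 2 * b * (y - b)"
  proof -
    have "2 * b \<le> p / b" using p b by (simp add: field_simps)
    then have "(y - b) * (p / b - 2 * b) \<le> 0" using y by (intro mult_nonpos_nonneg) auto
    then show ?thesis using b by (simp add: field_simps)
  qed
  finally have "exp (p * ln y) \<le> exp (p * ln b + 2 * b * (y - b))" by (simp add: algebra_simps)
  then show ?thesis using y_pos b by (simp add: powr_def exp_add mult.commute)
qed

text \<open>For \<open>p \<ge> 2 b\<^sup>2\<close> this weight dominates \<open>(\<bar>y\<bar> / b)\<^sup>p\<close>, yet its Gaussian mean is only
  of order \<open>\<phi>(b) / b\<close>.\<close>
definition exceedance_weight :: "real \<Rightarrow> real \<Rightarrow> real" where
  "exceedance_weight b y = (if b < \<bar>y\<bar> then 1 else exp (2 * b * (\<bar>y\<bar> - b)))"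

lemma exceedance_weight_nonneg: "0 \<le> exceedance_weight b y"
  by (simp add: exceedance_weight_def)

lemma exceedance_weight_sum_ge_1:
  assumes b: "0 < b" and p: "2 * b * b \<le> p" and norm_gt: "b < lp_norm n p x"
  shows "1 \<le> (\<Sum>i<n. exceedance_weight b (x i))"
proof (cases "\<exists>i<n. b < \<bar>x i\<bar>")
  case True
  then obtain i where i: "i < n" "b < \<bar>x i\<bar>" by auto
  then have "1 = exceedance_weight b (x i)" by (simp add: exceedance_weight_def)
  also have "\<dots> \<le> (\<Sum>i<n. exceedance_weight b (x i))"
    using i by (intro member_le_sum) (auto simp: exceedance_weight_nonneg)
  finally show ?thesis .
next
  case False
  have p_pos: "0 < p" using p b by (smt (verit) mult_pos_pos)
  let ?S = "\<Sum>j<n. \<bar>x j\<bar> powr p"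
  have "b powr p < (?S powr (1/p)) powr p"
    using norm_gt b p_pos unfolding lp_norm_def by (intro powr_less_mono2) auto
  also have "\<dots> = ?S" using p_pos by (simp add: powr_powr sum_nonneg)
  also have "?S \<le> (\<Sum>j<n. b powr p * exceedance_weight b (x j))"
  proof (rule sum_mono)
    fix j assume "j \<in> {..<n}"
    then have "\<bar>x j\<bar> \<le> b" using False by auto
    then show "\<bar>x j\<bar> powr p \<le> b powr p * exceedance_weight b (x j)"
      using powr_le_exp_tilt[of "\<bar>x j\<bar>" b p] b p by (simp add: exceedance_weight_def)
  qed
  finally have "b powr p * 1 < b powr p * (\<Sum>j<n. exceedance_weight b (x j))"
    by (simp add: sum_distrib_left)
  then show ?thesis using b by (simp add: mult_less_cancel_left)
qed

lemma lp_norm_gt_imp_coordinate_gt_half: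
  assumes b: "0 < b" and p: "0 < p" and n_root: "real n powr (1/p) \<le> 2"
    and norm_gt: "b < lp_norm n p x"
  shows "\<exists>i<n. b/2 < \<bar>x i\<bar>"
proof (rule ccontr)
  assume "\<not> (\<exists>i<n. b/2 < \<bar>x i\<bar>)"
  then have "(\<Sum>j<n. \<bar>x j\<bar> powr p) \<le> (\<Sum>j<n. (b/2) powr p)"
    using p by (intro sum_mono powr_mono2) auto
  then have "lp_norm n p x \<le> (real n * (b/2) powr p) powr (1/p)"
    unfolding lp_norm_def using p by (intro powr_mono2) (auto simp: sum_nonneg)
  also have "\<dots> = real n powr (1/p) * (b/2)"
    using p b by (simp add: powr_mult powr_powr)
  also have "\<dots> \<le> b" using n_root b by (simp add: mult_right_mono)
  finally show False using norm_gt by simp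
qed

section \<open>Tails of the \<open>l\<^sub>p\<close> norm of a Gaussian vector\<close>

lemma lp_norm_upper_tail_large_p:
  assumes b: "0 < b" and p: "2 * b * b \<le> p"
  shows "emeasure (std_gaussian n) {x\<in>space (std_gaussian n). b < lp_norm n p x}
           \<le> ennreal (4 * real n * std_normal_density b / b)"
proof -
  have "emeasure (std_gaussian n) {x\<in>space (std_gaussian n). b < lp_norm n p x}
      \<le> ennreal (real n) * (\<integral>\<^sup>+y. ennreal (exceedance_weight b y) \<partial>std_normal)"
  proof (rule emeasure_std_gaussian_le_coordinate_sum[OF _ exceedance_weight_nonneg])
    show "exceedance_weight b \<in> borel_measurable borel"
      unfolding exceedance_weight_def[abs_def] by measurable
  qed (use exceedance_weight_sum_ge_1[OF b p] in auto)
  also have "(\<integral>\<^sup>+y. ennreal (exceedance_weight b y) \<partial>std_normal)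
      = (\<integral>\<^sup>+y. indicator {y. b < \<bar>y\<bar>} y
          + ennreal (exp (2 * b * (\<bar>y\<bar> - b))) * indicator {y. \<bar>y\<bar> \<le> b} y \<partial>std_normal)"
    by (intro nn_integral_cong) (auto simp: exceedance_weight_def indicator_def)
  also have "\<dots> = emeasure std_normal {y. b < \<bar>y\<bar>}
      + (\<integral>\<^sup>+y. ennreal (exp (2 * b * (\<bar>y\<bar> - b))) * indicator {y. \<bar>y\<bar> \<le> b} y \<partial>std_normal)"
    by (subst nn_integral_add) auto
  also have "\<dots> \<le> ennreal (2 * std_normal_density b / b) + ennreal (2 * std_normal_density b / b)"
    by (intro add_mono std_normal_tail_le nn_integral_std_normal_exp_tilt_le b)
  also have "ennreal (real n) * \<dots> = ennreal (4 * real n * std_normal_density b / b)"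
    using b by (simp add: ennreal_mult[symmetric] ennreal_plus[symmetric] del: ennreal_plus)
  finally show ?thesis by (simp add: mult_left_mono)
qed

lemma lp_norm_upper_tail_small_p:
  assumes b: "0 < b" and p: "0 < p" and n_root: "real n powr (1/p) \<le> 2"
  shows "emeasure (std_gaussian n) {x\<in>space (std_gaussian n). b < lp_norm n p x}
           \<le> ennreal (4 * real n * std_normal_density (b/2) / b)"
proof -
  let ?g = "\<lambda>y::real. indicator {y. b/2 < \<bar>y\<bar>} y :: real"
  have "emeasure (std_gaussian n) {x\<in>space (std_gaussian n). b < lp_norm n p x}
      \<le> ennreal (real n) * (\<integral>\<^sup>+y. ennreal (?g y) \<partial>std_normal)"
  proof (rule emeasure_std_gaussian_le_coordinate_sum)
    fix x assume "x \<in> {x\<in>space (std_gaussian n). b < lp_norm n p x}"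
    then obtain i where i: "i < n" "b/2 < \<bar>x i\<bar>"
      using lp_norm_gt_imp_coordinate_gt_half[OF b p n_root] by auto
    then have "1 = ?g (x i)" by simp
    also have "\<dots> \<le> (\<Sum>i<n. ?g (x i))" using i by (intro member_le_sum) auto
    finally show "1 \<le> (\<Sum>i<n. ?g (x i))" .
  qed auto
  also have "(\<integral>\<^sup>+y. ennreal (?g y) \<partial>std_normal) = emeasure std_normal {y. b/2 < \<bar>y\<bar>}"
    by (simp add: ennreal_indicator)
  also have "ennreal (real n) * \<dots> \<le> ennreal (real n) * ennreal (2 * std_normal_density (b/2) / (b/2))"
    using b by (intro mult_left_mono std_normal_tail_le) auto
  also have "\<dots> = ennreal (4 * real n * std_normal_density (b/2) / b)"
    using b by (subst ennreal_mult[symmetric]) auto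
  finally show ?thesis .
qed

text \<open>The event that all coordinates are bounded by \<open>u\<close> has probability
  \<open>(1 - q)\<^sup>n \<le> exp (- n q) \<le> 1 / (n q)\<close>, where \<open>q\<close> is the Gaussian tail at \<open>u\<close>.\<close>
lemma std_gaussian_all_coordinates_le:
  assumes n: "0 < n" and u: "1 \<le> u"
  shows "measure (std_gaussian n) {x\<in>space (std_gaussian n). \<forall>i<n. \<bar>x i\<bar> \<le> u}
           \<le> exp 2 * u / (real n * std_normal_density u)"
proof -
  define q where "q = measure std_normal {y. u < \<bar>y\<bar>}"
  have q_le_1: "q \<le> 1" unfolding q_def by (rule std_normal.prob_le_1)
  have "emeasure (std_gaussian n) {x\<in>space (std_gaussian n). \<forall>i<n. x i \<in> {y. \<bar>y\<bar> \<le> u}}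
      = emeasure std_normal {y. \<bar>y\<bar> \<le> u} ^ n"
    by (rule emeasure_std_gaussian_all_coordinates) measurable
  also have "emeasure std_normal {y. \<bar>y\<bar> \<le> u} = ennreal (1 - q)"
  proof -
    have "{y. \<bar>y\<bar> \<le> u} = space std_normal - {y. u < \<bar>y\<bar>}" by auto
    moreover have "{y::real. u < \<bar>y\<bar>} \<in> sets borel" by measurable
    ultimately have "measure std_normal {y. \<bar>y\<bar> \<le> u} = 1 - q"
      unfolding q_def using std_normal.prob_compl[of "{y. u < \<bar>y\<bar>}"] by simp
    then show ?thesis by (simp add: std_normal.emeasure_eq_measure)
  qed
  finally have "measure (std_gaussian n) {x\<in>space (std_gaussian n). \<forall>i<n. \<bar>x i\<bar> \<le> u} = (1 - q) ^ n"
    using q_le_1 by (simp add: std_gaussian.emeasure_eq_measure ennreal_power)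
  also have "(1 - q) ^ n \<le> exp (- q) ^ n"
    using exp_ge_add_one_self[of "-q"] q_le_1 by (intro power_mono) auto
  also have "\<dots> = exp (- (real n * q))" by (simp add: exp_of_nat_mult[symmetric] mult.commute)
  also have "\<dots> \<le> exp (- (real n * (exp (-2) * std_normal_density u / u)))"
    using mult_left_mono[OF std_normal_tail_ge[OF u], of "real n"] unfolding q_def by simp
  also have "\<dots> \<le> 1 / (real n * (exp (-2) * std_normal_density u / u))"
  proof -
    let ?z = "real n * (exp (-2) * std_normal_density u / u)"
    have z_pos: "0 < ?z" using n u by (simp add: normal_density_pos)
    have "?z \<le> exp ?z" using exp_ge_add_one_self[of ?z] by linarith
    then have "1 / exp ?z \<le> 1 / ?z" by (intro divide_left_mono mult_pos_pos z_pos) auto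
    then show ?thesis by (simp add: exp_minus inverse_eq_divide)
  qed
  also have "\<dots> = exp 2 * u / (real n * std_normal_density u)"
    using n u by (simp add: exp_minus field_simps normal_density_pos)
  finally show ?thesis .
qed

section \<open>Variance bounds from exponential tails\<close>

lemma sq_le_suminf_shells:
  fixes y d :: real assumes y: "0 \<le> y" and d: "0 < d"
  shows "ennreal (y\<^sup>2) \<le> (\<Sum>k. ennreal (((real k + 1) * d)\<^sup>2) * of_bool (real k * d < y))"
proof (cases "y = 0")
  case True then show ?thesis by simp
next
  case False
  define m where "m = \<lceil>y / d\<rceil>"
  have m: "1 \<le> m" unfolding m_def using False y d by (simp add: one_le_ceiling)
  define k where "k = nat m - 1"
  have k: "real k = of_int m - 1" unfolding k_def using m by simp
  have "of_int m - 1 < y / d" "y / d \<le> of_int m" unfolding m_def by linarith+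
  then have "(of_int m - 1) * d < y" "y \<le> of_int m * d"
    using d by (simp_all add: less_divide_eq divide_le_eq)
  then have shell: "real k * d < y" "y \<le> (real k + 1) * d" using k by simp_all
  have "ennreal (y\<^sup>2) \<le> ennreal (((real k + 1) * d)\<^sup>2) * of_bool (real k * d < y)"
    using shell y by (simp add: power_mono)
  also have "\<dots> = (\<Sum>j\<in>{k}. ennreal (((real j + 1) * d)\<^sup>2) * of_bool (real j * d < y))"
    by simp
  also have "\<dots> \<le> (\<Sum>j. ennreal (((real j + 1) * d)\<^sup>2) * of_bool (real j * d < y))"
    by (rule sum_le_suminf) auto
  finally show ?thesis .
qed

lemma sq_mult_exp_neg_4_le_geometric: "(real k + 1)\<^sup>2 * exp (- 4 * real k) \<le> (1/2) ^ k"
proof -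
  have "real k + 1 \<le> exp (real k)" by (metis add.commute exp_ge_add_one_self)
  then have "(real k + 1)\<^sup>2 \<le> exp (2 * real k)"
    using power_mono[of "real k + 1" "exp (real k)" 2] by (simp add: exp_double[symmetric])
  then have "(real k + 1)\<^sup>2 * exp (- 4 * real k) \<le> exp (2 * real k) * exp (- 4 * real k)"
    by (rule mult_right_mono) simp
  also have "\<dots> = exp (-2) ^ k" by (simp add: exp_add[symmetric] exp_of_nat_mult[symmetric])
  also have "\<dots> \<le> (1/2) ^ k"
  proof (rule power_mono)
    have "3 \<le> exp (2::real)" using exp_ge_add_one_self[of 2] by simp
    then show "exp (-2) \<le> (1/2::real)" by (simp add: exp_minus inverse_eq_divide field_simps)
  qed simp
  finally show ?thesis .
qed

lemma (in prob_space) nn_integral_sq_le_of_exp_tail: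
  fixes f :: "'a \<Rightarrow> real"
  assumes f[measurable]: "f \<in> borel_measurable M" and d: "0 < d"
    and tail: "\<And>k. prob {x\<in>space M. real k * d < \<bar>f x\<bar>} \<le> K * exp (- 4 * real k)"
  shows "(\<integral>\<^sup>+x. ennreal ((f x)\<^sup>2) \<partial>M) \<le> ennreal (2 * K * d\<^sup>2)"
proof -
  let ?S = "\<lambda>k::nat. {x\<in>space M. real k * d < \<bar>f x\<bar>}"
  have K: "0 \<le> K" using order_trans[OF measure_nonneg tail[of 0]] by simp
  have "(\<integral>\<^sup>+x. ennreal ((f x)\<^sup>2) \<partial>M)
      \<le> (\<integral>\<^sup>+x. (\<Sum>k. ennreal (((real k + 1) * d)\<^sup>2) * indicator (?S k) x) \<partial>M)"
  proof (rule nn_integral_mono)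
    fix x assume x: "x \<in> space M"
    have "ennreal ((f x)\<^sup>2) = ennreal (\<bar>f x\<bar>\<^sup>2)" by simp
    also have "\<dots> \<le> (\<Sum>k. ennreal (((real k + 1) * d)\<^sup>2) * of_bool (real k * d < \<bar>f x\<bar>))"
      by (rule sq_le_suminf_shells[OF _ d]) simp
    finally show "ennreal ((f x)\<^sup>2) \<le> (\<Sum>k. ennreal (((real k + 1) * d)\<^sup>2) * indicator (?S k) x)"
      using x by (simp add: indicator_def)
  qed
  also have "\<dots> = (\<Sum>k. ennreal (((real k + 1) * d)\<^sup>2) * emeasure M (?S k))"
    by (subst nn_integral_suminf) (auto simp: nn_integral_cmult_indicator)
  also have "\<dots> \<le> (\<Sum>k. ennreal (K * d\<^sup>2 * (1/2) ^ k))"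
  proof (rule suminf_le)
    fix k :: nat
    have "((real k + 1) * d)\<^sup>2 * prob (?S k) \<le> ((real k + 1) * d)\<^sup>2 * (K * exp (- 4 * real k))"
      by (rule mult_left_mono[OF tail]) simp
    also have "\<dots> = K * d\<^sup>2 * ((real k + 1)\<^sup>2 * exp (- 4 * real k))"
      by (simp add: power_mult_distrib)
    also have "\<dots> \<le> K * d\<^sup>2 * (1/2) ^ k"
      using K by (intro mult_left_mono sq_mult_exp_neg_4_le_geometric) auto
    finally show "ennreal (((real k + 1) * d)\<^sup>2) * emeasure M (?S k) \<le> ennreal (K * d\<^sup>2 * (1/2) ^ k)"
      by (simp add: emeasure_eq_measure ennreal_mult[symmetric] ennreal_leI)
  qed simp_all
  also have "\<dots> = ennreal (2 * K * d\<^sup>2)"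
  proof (rule suminf_ennreal_eq)
    show "\<And>k. 0 \<le> K * d\<^sup>2 * (1/2) ^ k" using K by simp
    have "(\<lambda>k. (1/2::real) ^ k) sums 2" using geometric_sums[of "1/2::real"] by simp
    then show "(\<lambda>k. K * d\<^sup>2 * (1/2) ^ k) sums (2 * K * d\<^sup>2)"
      using sums_mult[of "\<lambda>k. (1/2::real) ^ k" 2 "K * d\<^sup>2"] by (simp add: mult_ac)
  qed
  finally show ?thesis .
qed

lemma (in prob_space) var_le_nn_integral_sq_dev:
  fixes f :: "'a \<Rightarrow> real"
  assumes f[measurable]: "f \<in> borel_measurable M" and B: "0 \<le> B"
    and dev: "(\<integral>\<^sup>+x. ennreal ((f x - c)\<^sup>2) \<partial>M) \<le> ennreal B"
  shows "var M f \<le> B"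
proof -
  let ?g = "\<lambda>x. (f x - c)\<^sup>2"
  have int_g: "integrable M ?g"
    using dev by (intro integrableI_nonneg) (auto simp: top.not_eq_extremum order_le_less_trans)
  have "(\<integral>x. ?g x \<partial>M) \<le> B"
    using dev B by (simp add: integral_eq_nn_integral enn2real_leI)
  have int_sq: "integrable M (\<lambda>x. (f x)\<^sup>2)"
  proof (rule Bochner_Integration.integrable_bound)
    show "integrable M (\<lambda>x. 2 * ?g x + 2 * c\<^sup>2)" using int_g by simp
    have "(f x)\<^sup>2 \<le> 2 * ?g x + 2 * c\<^sup>2" for x
      using zero_le_power2[of "f x - 2 * c"] by (simp add: power2_eq_square algebra_simps)
    then show "AE x in M. norm ((f x)\<^sup>2) \<le> norm (2 * ?g x + 2 * c\<^sup>2)" by simp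
  qed simp
  have int_f: "integrable M f"
  proof (rule Bochner_Integration.integrable_bound)
    show "integrable M (\<lambda>x. (f x)\<^sup>2 + 1)" using int_sq by simp
    have "\<bar>f x\<bar> \<le> (f x)\<^sup>2 + 1" for x
      using zero_le_power2[of "\<bar>f x\<bar> - 1"] by (simp add: power2_eq_square algebra_simps)
    then show "AE x in M. norm (f x) \<le> norm ((f x)\<^sup>2 + 1)" by simp
  qed simp
  define m where "m = (\<integral>x. f x \<partial>M)"
  have "var M f = (\<integral>x. (f x)\<^sup>2 \<partial>M) - m\<^sup>2"
    unfolding var_def m_def using variance_eq[OF int_f int_sq] by simp
  also have "\<dots> = (\<integral>x. ?g x \<partial>M) - (m - c)\<^sup>2"
  proof -
    have "(\<integral>x. ?g x \<partial>M) = (\<integral>x. (f x)\<^sup>2 - 2 * c * f x + c\<^sup>2 \<partial>M)"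
      by (simp add: power2_eq_square algebra_simps)
    also have "\<dots> = (\<integral>x. (f x)\<^sup>2 \<partial>M) - 2 * c * m + c\<^sup>2"
      using int_f int_sq unfolding m_def by (simp add: prob_space)
    finally show ?thesis by (simp add: power2_eq_square algebra_simps)
  qed
  also have "\<dots> \<le> B" using \<open>(\<integral>x. ?g x \<partial>M) \<le> B\<close> zero_le_power2[of "m - c"] by linarith
  finally show ?thesis .
qed

lemma (in prob_space) var_le_of_exp_tail:
  fixes f :: "'a \<Rightarrow> real"
  assumes f[measurable]: "f \<in> borel_measurable M" and d: "0 < d"
    and tail: "\<And>k. prob {x\<in>space M. real k * d < \<bar>f x - c\<bar>} \<le> K * exp (- 4 * real k)"
  shows "var M f \<le> 2 * K * d\<^sup>2"
proof (rule var_le_nn_integral_sq_dev[OF f])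
  show "0 \<le> 2 * K * d\<^sup>2"
    using order_trans[OF measure_nonneg tail[of 0]] by simp
  show "(\<integral>\<^sup>+x. ennreal ((f x - c)\<^sup>2) \<partial>M) \<le> ennreal (2 * K * d\<^sup>2)"
    by (rule nn_integral_sq_le_of_exp_tail[OF _ d tail]) simp
qed

section \<open>The Gaussian scale of \<open>n\<close> coordinates\<close>

lemma exp_neg_sq_half_eq_of_density_eq:
  assumes n: "0 < n" and a: "real n * std_normal_density a = a"
  shows "exp (- a\<^sup>2 / 2) = sqrt (2 * pi) * a / real n"
proof -
  have "real n * (exp (- a\<^sup>2 / 2) / sqrt (2 * pi)) = a"
    using a unfolding std_normal_density_def by simp
  then show ?thesis using n by (simp add: field_simps)
qed

lemma inverse_le_exp_neg_sq_half_of_density_eq: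
  assumes n: "0 < n" and a: "1 \<le> a" "real n * std_normal_density a = a"
  shows "1 / real n \<le> exp (- a\<^sup>2 / 2)"
proof -
  have "1 \<le> sqrt (2 * pi) * a"
    using a(1) pi_gt3 mult_mono[of 1 "sqrt (2 * pi)" 1 a] by (simp add: real_le_rsqrt)
  then have "1 / real n \<le> sqrt (2 * pi) * a / real n"
    using n by (simp add: divide_right_mono)
  also have "\<dots> = exp (- a\<^sup>2 / 2)"
    by (rule exp_neg_sq_half_eq_of_density_eq[OF n a(2), symmetric])
  finally show ?thesis .
qed

lemma sq_le_2_ln_of_density_eq:
  assumes n: "0 < n" and a: "1 \<le> a" "real n * std_normal_density a = a"
  shows "a\<^sup>2 \<le> 2 * ln (real n)"
proof -
  have "exp (- ln (real n)) \<le> exp (- a\<^sup>2 / 2)"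
    using inverse_le_exp_neg_sq_half_of_density_eq[OF assms] n
    by (simp add: exp_minus inverse_eq_divide)
  then show ?thesis by simp
qed

lemma four_pi_ln_le: assumes "1024 \<le> n" shows "4 * pi * ln (real n) \<le> real n"
proof -
  have n: "0 < real n" using assms by simp
  have "32 \<le> sqrt (real n)" using assms by (intro real_le_rsqrt) simp
  have "ln (real n) = 2 * ln (sqrt (real n))" using n by (simp add: ln_sqrt)
  also have "ln (sqrt (real n)) \<le> sqrt (real n) - 1" using n by (intro ln_le_minus_one) simp
  finally have "4 * pi * ln (real n) \<le> 4 * pi * (2 * sqrt (real n))" by simp
  also have "\<dots> \<le> 32 * sqrt (real n)" using pi_less_4 by (simp add: mult_right_mono)
  also have "\<dots> \<le> sqrt (real n) * sqrt (real n)"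
    using \<open>32 \<le> sqrt (real n)\<close> by (intro mult_right_mono) auto
  finally show ?thesis using n by simp
qed

lemma ln_le_sq_of_density_eq:
  assumes n: "1024 \<le> n" and a: "1 \<le> a" "real n * std_normal_density a = a"
  shows "ln (real n) \<le> a\<^sup>2"
proof -
  have n_pos: "0 < n" using n by simp
  have "exp (- a\<^sup>2) = (exp (- a\<^sup>2 / 2))\<^sup>2" by (simp add: power2_eq_square exp_add[symmetric])
  also have "\<dots> = 2 * pi * a\<^sup>2 / (real n)\<^sup>2"
    unfolding exp_neg_sq_half_eq_of_density_eq[OF n_pos a(2)] by (simp add: power_divide power_mult_distrib)
  also have "\<dots> \<le> 4 * pi * ln (real n) / (real n)\<^sup>2"
    using sq_le_2_ln_of_density_eq[OF n_pos a] by (simp add: divide_right_mono)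
  also have "\<dots> \<le> real n / (real n)\<^sup>2"
    using four_pi_ln_le[OF n] by (simp add: divide_right_mono)
  also have "\<dots> = exp (- ln (real n))"
    using n_pos by (simp add: power2_eq_square exp_minus inverse_eq_divide)
  finally show ?thesis by simp
qed

lemma exists_density_eq:
  assumes n: "6 \<le> n"
  shows "\<exists>a\<ge>1. real n * std_normal_density a = a"
proof -
  let ?g = "\<lambda>x. real n * std_normal_density x / x"
  have "?g (real n) = std_normal_density (real n)" using n by simp
  also have "\<dots> \<le> exp (- (real n)\<^sup>2 / 2)" by (rule std_normal_density_le_exp)
  also have "\<dots> \<le> 1" by simp
  finally have "?g (real n) \<le> 1" .
  moreover have "1 \<le> ?g 1"
    using n mult_mono[OF _ std_normal_density_1_bounds(1), of 6 "real n"] by simp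
  moreover have "\<forall>x. 1 \<le> x \<and> x \<le> real n \<longrightarrow> isCont ?g x"
    unfolding std_normal_density_def by (auto intro!: continuous_intros)
  ultimately obtain a where "1 \<le> a" "?g a = 1"
    using IVT2[of ?g "real n" 1 1] n by auto
  then show ?thesis by (auto simp: divide_eq_1_iff)
qed

text \<open>The scale \<open>a\<close> is where the expected number of coordinates with \<open>\<bar>X\<^sub>i\<bar> > a\<close>,
  about \<open>2 n \<phi>(a) / a\<close>, is of order one.\<close>
locale gaussian_lp_scale =
  fixes n :: nat and p a :: real
  assumes one_le_a: "1 \<le> a" and density_eq: "real n * std_normal_density a = a"
    and one_le_ln_n: "1 \<le> ln (real n)" and p_gt: "400 * ln (real n) < p"
begin

lemma n_pos: "0 < n"
  using one_le_ln_n by (cases "n = 0") auto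

lemma p_pos: "0 < p"
  using p_gt one_le_ln_n by simp

lemma a_sq_le: "a\<^sup>2 \<le> 2 * ln (real n)"
  by (rule sq_le_2_ln_of_density_eq[OF n_pos one_le_a density_eq])

lemma n_root_le_2: "real n powr (1/p) \<le> 2"
proof -
  have "ln (real n) \<le> p * (2/3)" using p_gt one_le_ln_n by linarith
  also have "\<dots> \<le> p * ln 2" using ln2_ge_two_thirds p_pos by (intro mult_left_mono) auto
  finally have "ln (real n) / p \<le> ln 2" using p_pos by (simp add: divide_le_eq mult.commute)
  then have "exp (ln (real n) / p) \<le> 2"
    by (metis exp_le_cancel_iff exp_ln zero_less_numeral)
  then show ?thesis using n_pos by (simp add: powr_def)
qed

lemma density_ratio_le:
  assumes b: "a \<le> b"
  shows "real n * std_normal_density b / b \<le> exp (- a * (b - a))"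
proof -
  have "real n * std_normal_density b / b = a / b * exp (- (b\<^sup>2 - a\<^sup>2) / 2)"
    using density_eq by (subst std_normal_density_shift[of b a]) (simp add: mult_ac)
  also have "\<dots> \<le> exp (- (b\<^sup>2 - a\<^sup>2) / 2)"
    using b one_le_a by (intro mult_left_le_one_le) auto
  also have "\<dots> \<le> exp (- a * (b - a))"
  proof -
    have "0 \<le> (b - a) * (b - a)" by simp
    then have "a * (b - a) \<le> (b\<^sup>2 - a\<^sup>2) / 2" by (simp add: power2_eq_square algebra_simps)
    then show ?thesis by simp
  qed
  finally show ?thesis .
qed

text \<open>For \<open>p < 2 b\<^sup>2\<close> the hypothesis \<open>p > 400 ln n\<close> forces \<open>b > 10 a\<close>.\<close>
lemma density_ratio_half_le:
  assumes b: "a \<le> b" and p: "p < 2 * b * b"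
  shows "real n * std_normal_density (b/2) / b \<le> exp (- a * (b - a))"
proof -
  have b1: "1 \<le> b" using one_le_a b by simp
  have ln_n: "ln (real n) < b * b / 200" using p_gt p by linarith
  then have "(10 * a)\<^sup>2 < b\<^sup>2" using a_sq_le by (simp add: power2_eq_square)
  then have "10 * a < b" by (rule power_less_imp_less_base) (use b1 in simp)
  then have ab: "10 * (a * b) \<le> b * b" using b1 by (simp add: mult_right_mono)
  have "0 \<le> real n * std_normal_density (b/2)" by (simp add: normal_density_nonneg)
  then have "real n * std_normal_density (b/2) / b \<le> real n * std_normal_density (b/2)"
    using divide_left_mono[OF b1] b1 by fastforce
  also have "\<dots> \<le> real n * exp (- (b/2)\<^sup>2 / 2)"
    by (intro mult_left_mono std_normal_density_le_exp) simp
  also have "\<dots> = real n * exp (- (b * b / 8))" by (simp add: power2_eq_square)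
  also have "\<dots> = exp (ln (real n) - b * b / 8)"
    using n_pos by (simp add: exp_diff exp_minus inverse_eq_divide)
  also have "\<dots> \<le> exp (- a * (b - a))"
  proof -
    have "ln (real n) - b * b / 8 \<le> a * a - a * b"
      using ln_n ab zero_le_square[of a] zero_le_square[of b] by linarith
    then show ?thesis by (simp add: algebra_simps)
  qed
  finally show ?thesis .
qed

lemma lp_norm_upper_tail:
  assumes b: "a \<le> b"
  shows "measure (std_gaussian n) {x\<in>space (std_gaussian n). b < lp_norm n p x}
           \<le> 4 * exp (- a * (b - a))"
proof -
  have b_pos: "0 < b" using one_le_a b by simp
  have "emeasure (std_gaussian n) {x\<in>space (std_gaussian n). b < lp_norm n p x}
      \<le> ennreal (4 * exp (- a * (b - a)))"
  proof (cases "2 * b * b \<le> p")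
    case True
    have "4 * real n * std_normal_density b / b \<le> 4 * exp (- a * (b - a))"
      using density_ratio_le[OF b] by simp
    then show ?thesis
      using lp_norm_upper_tail_large_p[OF b_pos True] by (meson ennreal_leI order_trans)
  next
    case False
    have "4 * real n * std_normal_density (b/2) / b \<le> 4 * exp (- a * (b - a))"
      using density_ratio_half_le[OF b] False by simp
    then show ?thesis
      using lp_norm_upper_tail_small_p[OF b_pos p_pos n_root_le_2] by (meson ennreal_leI order_trans)
  qed
  then show ?thesis by (simp add: std_gaussian.emeasure_eq_measure)
qed

lemma density_ratio_ge:
  assumes s: "0 \<le> s" "1 \<le> a - s"
  shows "exp (a * s / 2) \<le> real n * std_normal_density (a - s) / (a - s)"
proof -
  let ?u = "a - s"
  have "exp (a * s / 2) \<le> exp (a * s - s * s / 2)"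
    using s mult_right_mono[of s a s] by simp
  also have "\<dots> \<le> a / ?u * exp (a * s - s * s / 2)"
    using s by (intro mult_le_cancel_right1[THEN iffD2]) auto
  also have "\<dots> = real n * std_normal_density a * exp (a * s - s * s / 2) / ?u"
    using density_eq by simp
  also have "\<dots> = real n * std_normal_density ?u / ?u"
  proof -
    have "- (?u\<^sup>2 - a\<^sup>2) / 2 = a * s - s * s / 2" by (simp add: power2_eq_square field_simps)
    then show ?thesis by (simp add: std_normal_density_shift[of ?u a] mult.assoc)
  qed
  finally show ?thesis .
qed

lemma lower_tail_ratio_le:
  assumes s: "0 \<le> s" "s < a"
  shows "exp 2 * max 1 (a - s) / (real n * std_normal_density (max 1 (a - s)))
           \<le> exp 2 / std_normal_density 1 * exp (- (a * s / 2))"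
proof (cases "1 \<le> a - s")
  case True
  let ?u = "a - s"
  have "inverse (real n * std_normal_density ?u / ?u) \<le> inverse (exp (a * s / 2))"
    using density_ratio_ge[OF s(1) True] by (rule le_imp_inverse_le) simp
  then have "exp 2 * (?u / (real n * std_normal_density ?u)) \<le> exp 2 * exp (- (a * s / 2))"
    by (intro mult_left_mono) (simp_all add: exp_minus)
  also have "\<dots> \<le> exp 2 / std_normal_density 1 * exp (- (a * s / 2))"
    using std_normal_density_1_bounds by (simp add: normal_density_pos le_divide_eq)
  finally show ?thesis using True by simp
next
  case False
  have "1 / real n \<le> exp (- a\<^sup>2 / 2)"
    by (rule inverse_le_exp_neg_sq_half_of_density_eq[OF n_pos one_le_a density_eq])
  also have "\<dots> \<le> exp (- (a * s / 2))"
    using s one_le_a mult_left_mono[of s a a] by (simp add: power2_eq_square)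
  finally have "exp 2 / std_normal_density 1 * (1 / real n)
      \<le> exp 2 / std_normal_density 1 * exp (- (a * s / 2))"
    by (rule mult_left_mono) (simp add: normal_density_nonneg)
  then show ?thesis using False by (simp add: mult_ac)
qed

lemma lp_norm_lower_tail:
  assumes s: "0 \<le> s" "s < a"
  shows "measure (std_gaussian n) {x\<in>space (std_gaussian n). lp_norm n p x < a - s}
           \<le> exp 2 / std_normal_density 1 * exp (- (a * s / 2))"
proof -
  let ?u = "max 1 (a - s)"
  have "{x\<in>space (std_gaussian n). lp_norm n p x < a - s}
      \<subseteq> {x\<in>space (std_gaussian n). \<forall>i<n. x i \<in> {y. \<bar>y\<bar> \<le> ?u}}"
  proof safe
    fix x i assume "lp_norm n p x < a - s" "i < n"
    then show "\<bar>x i\<bar> \<le> ?u"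
      using abs_coordinate_le_lp_norm[OF p_pos \<open>i < n\<close>, of x] by linarith
  qed
  moreover have "{y::real. \<bar>y\<bar> \<le> ?u} \<in> sets borel" by measurable
  ultimately have "measure (std_gaussian n) {x\<in>space (std_gaussian n). lp_norm n p x < a - s}
      \<le> measure (std_gaussian n) {x\<in>space (std_gaussian n). \<forall>i<n. x i \<in> {y. \<bar>y\<bar> \<le> ?u}}"
    by (rule std_gaussian.finite_measure_mono[OF _ sets_std_gaussian_all_coordinates])
  also have "\<dots> \<le> exp 2 * ?u / (real n * std_normal_density ?u)"
    using std_gaussian_all_coordinates_le[OF n_pos, of ?u] by simp
  also have "\<dots> \<le> exp 2 / std_normal_density 1 * exp (- (a * s / 2))"
    by (rule lower_tail_ratio_le[OF s])
  finally show ?thesis .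
qed

lemma lp_norm_deviation_tail:
  "measure (std_gaussian n) {x\<in>space (std_gaussian n). real k * (8/a) < \<bar>lp_norm n p x - a\<bar>}
     \<le> (4 + exp 2 / std_normal_density 1) * exp (- 4 * real k)"
proof -
  define s where "s = real k * (8/a)"
  have s_nonneg: "0 \<le> s" and as: "a * s = 8 * real k"
    unfolding s_def using one_le_a by simp_all
  let ?upper = "{x\<in>space (std_gaussian n). a + s < lp_norm n p x}"
  let ?lower = "{x\<in>space (std_gaussian n). lp_norm n p x < a - s}"
  have sets: "?upper \<in> sets (std_gaussian n)" "?lower \<in> sets (std_gaussian n)" by measurable
  have "{x\<in>space (std_gaussian n). s < \<bar>lp_norm n p x - a\<bar>} \<subseteq> ?upper \<union> ?lower"
    by (auto simp: abs_if)
  then have "measure (std_gaussian n) {x\<in>space (std_gaussian n). s < \<bar>lp_norm n p x - a\<bar>}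
      \<le> measure (std_gaussian n) (?upper \<union> ?lower)"
    using sets by (intro std_gaussian.finite_measure_mono) auto
  also have "\<dots> \<le> measure (std_gaussian n) ?upper + measure (std_gaussian n) ?lower"
    using sets by (rule measure_Un_le)
  also have "\<dots> \<le> 4 * exp (- 4 * real k) + exp 2 / std_normal_density 1 * exp (- 4 * real k)"
  proof (rule add_mono)
    have "measure (std_gaussian n) ?upper \<le> 4 * exp (- a * (a + s - a))"
      by (rule lp_norm_upper_tail) (use s_nonneg in simp)
    also have "\<dots> \<le> 4 * exp (- 4 * real k)" using as by simp
    finally show "measure (std_gaussian n) ?upper \<le> 4 * exp (- 4 * real k)" .
    show "measure (std_gaussian n) ?lower \<le> exp 2 / std_normal_density 1 * exp (- 4 * real k)"
    proof (cases "s < a")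
      case True
      then show ?thesis using lp_norm_lower_tail[OF s_nonneg True] as by simp
    next
      case False
      then have "\<not> lp_norm n p x < a - s" for x using lp_norm_nonneg[of n p x] by linarith
      then have lower_empty: "?lower = {}" by blast
      show ?thesis unfolding lower_empty by (simp add: normal_density_pos)
    qed
  qed
  finally show ?thesis unfolding s_def by (simp add: algebra_simps)
qed

lemma var_lp_norm_le:
  "var (std_gaussian n) (lp_norm n p) \<le> 128 * (4 + exp 2 / std_normal_density 1) / a\<^sup>2"
proof -
  have "var (std_gaussian n) (lp_norm n p) \<le> 2 * (4 + exp 2 / std_normal_density 1) * (8/a)\<^sup>2"
    using one_le_a lp_norm_deviation_tail
    by (intro std_gaussian.var_le_of_exp_tail[where c=a]) auto
  then show ?thesis by (simp add: power_divide)
qed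

end

lemma var_lp_norm_le_ln:
  assumes n: "1024 \<le> n" and p: "400 * ln (real n) < p"
  shows "var (std_gaussian n) (lp_norm n p) \<le> 128 * (4 + exp 2 / std_normal_density 1) / ln (real n)"
proof -
  have "6 \<le> n" using n by simp
  then obtain a where a: "1 \<le> a" "real n * std_normal_density a = a"
    using exists_density_eq by blast
  have ln_n: "1 \<le> ln (real n)"
    using n ln_ge_iff[of "real n" 1] exp_le by simp
  interpret gaussian_lp_scale n p a
    using a ln_n p by unfold_locales auto
  have "var (std_gaussian n) (lp_norm n p) \<le> 128 * (4 + exp 2 / std_normal_density 1) / a\<^sup>2"
    by (rule var_lp_norm_le)
  also have "\<dots> \<le> 128 * (4 + exp 2 / std_normal_density 1) / ln (real n)"
    using ln_le_sq_of_density_eq[OF n a] ln_n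
    by (intro divide_left_mono mult_pos_pos) (auto simp: normal_density_pos add_nonneg_nonneg)
  finally show ?thesis .
qed

theorem proposition3p14:
  shows "\<exists>C c :: real. \<exists>N0 :: nat. C > 0 \<and> c > 0 \<and>
    (\<forall>n \<ge> N0. \<forall>p :: real. p \<ge> 1 \<longrightarrow> p > c * ln (real n) \<longrightarrow>
       var (std_gaussian n) (lp_norm n p) \<le> C / ln (real n))"
proof (intro exI conjI allI impI)
  show "0 < 128 * (4 + exp 2 / std_normal_density 1)"
    by (simp add: normal_density_pos add_pos_nonneg)
  show "(0::real) < 400" by simp
  fix n :: nat and p :: real
  assume "1024 \<le> n" and "400 * ln (real n) < p"
  then show "var (std_gaussian n) (lp_norm n p) \<le> 128 * (4 + exp 2 / std_normal_density 1) / ln (real n)"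
    by (rule var_lp_norm_le_ln)
qed

end
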